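(* \[ \lim_{M\to\infty}\ \lim_{k\to\infty}\ \sum_{i=M}^{k-M}\Pr[BINGO(i,k-i)]=0, \] where for each fixed $M$ the inner limit exists.
   Context: Fix $\alpha>1$. Let $(X_k,Y_k)_{k\ge2}$ be the Markov chain on $\mathbb N\times\mathbb N$ with $(X_2,Y_2)=(1,1)$ and, from state $(i,j)$, moving to $(i+1,j)$ with probability $i^\alpha/(i^\alpha+j^\alpha)$ and to $(i,j+1)$ with probability $j^\alpha/(i^\alpha+j^\alpha)$. $BINGO(i,j)$ is the event that the chain visits the state $(i,j)$. *)

theory Defs
  imports "HOL-Probability.Probability_Mass_Function"
begin

definition bingo_step :: "real \<Rightarrow> nat \<times> nat \<Rightarrow> (nat \<times> nat) pmf" where
  "bingo_step \<alpha> s = (case s of (i, j) \<Rightarrow>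
     map_pmf (\<lambda>b. if b then (i + 1, j) else (i, j + 1))
       (bernoulli_pmf (real i powr \<alpha> / (real i powr \<alpha> + real j powr \<alpha>))))"

text \<open>bingo_dist a n is the law of (X_(n+2), Y_(n+2)); the chain starts at time 2 in (1,1).\<close>
primrec bingo_dist :: "real \<Rightarrow> nat \<Rightarrow> (nat \<times> nat) pmf" where
  "bingo_dist \<alpha> 0 = return_pmf (1, 1)"
| "bingo_dist \<alpha> (Suc n) = bind_pmf (bingo_dist \<alpha> n) (bingo_step \<alpha>)"

text \<open>Pr[BINGO(i,j)]: since X_k + Y_k = k, the chain visits (i,j) iff it is at (i,j) at time i+j.\<close>
definition bingo_prob :: "real \<Rightarrow> nat \<Rightarrow> nat \<Rightarrow> real" where
  "bingo_prob \<alpha> i j = pmf (bingo_dist \<alpha> (i + j - 2)) (i, j)"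

end

theory Submission
  imports Defs "HOL-Probability.Distributions"
begin

text \<open>
  Rubin's exponential embedding. Attach to each coordinate an independent clock that moves from
  level \<open>l\<close> to \<open>l + 1\<close> after an \<open>Exp(l\<^sup>\<alpha>)\<close>-distributed time; the chain records which clock ticks
  next. Let \<open>D\<close> be the remaining time of the first clock minus that of the second. By
  memorylessness, \<open>E[F(D)]\<close> conditioned on the current state is a martingale along the chain. At the
  start \<open>D\<close> has a density bounded by \<open>1\<close>, so \<open>P(|D| \<le> \<eta>) \<le> 2\<eta>\<close>. Once both coordinates are at
  least \<open>M\<close>, both remaining times have mean at most \<open>t\<^sub>M\<close>, the tail from \<open>M\<close> of the series of
  \<open>1 / l\<^sup>\<alpha>\<close>, so by Markov's inequality \<open>|D| \<le> \<eta>\<close> fails with probability at most \<open>2 t\<^sub>M / \<eta>\<close>.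
  Hence both coordinates reach \<open>M\<close> with probability at most \<open>2\<eta> + 2 t\<^sub>M / \<eta>\<close>, which is \<open>4 \<surd>t\<^sub>M\<close>
  for \<open>\<eta> = \<surd>t\<^sub>M\<close> and tends to \<open>0\<close>.
\<close>

definition avg_up :: "real \<Rightarrow> (real \<Rightarrow> ennreal) \<Rightarrow> real \<Rightarrow> ennreal" where
  "avg_up l f x = (\<integral>\<^sup>+t. ennreal (exponential_density l t) * f (x + t) \<partial>lborel)"

definition avg_down :: "real \<Rightarrow> (real \<Rightarrow> ennreal) \<Rightarrow> real \<Rightarrow> ennreal" where
  "avg_down l f x = avg_up l (\<lambda>y. f (- y)) (- x)"

lemma avg_up_measurable[measurable]:
  assumes [measurable]: "f \<in> borel_measurable borel"
  shows "avg_up l f \<in> borel_measurable borel"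
proof -
  have "(\<lambda>x. \<integral>\<^sup>+t. ennreal (exponential_density l t) * f (x + t) \<partial>lborel) \<in> borel_measurable lborel"
    by measurable
  then show ?thesis unfolding avg_up_def[abs_def] by simp
qed

lemma avg_down_measurable[measurable]:
  assumes [measurable]: "f \<in> borel_measurable borel"
  shows "avg_down l f \<in> borel_measurable borel"
  unfolding avg_down_def[abs_def] by measurable

lemma avg_down_eq: "avg_down m f y = (\<integral>\<^sup>+s. ennreal (exponential_density m s) * f (y - s) \<partial>lborel)"
  by (simp add: avg_down_def avg_up_def)

lemma nn_integral_exponential_density: "0 < l \<Longrightarrow> (\<integral>\<^sup>+t. ennreal (exponential_density l t) \<partial>lborel) = 1"
  using nn_integral_erlang_ith_moment[of l 0 0] by simp

lemma nn_integral_exponential_density_mult_exp: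
  assumes "0 < l" "0 < m"
  shows "(\<integral>\<^sup>+t. ennreal (exponential_density l t) * ennreal (exp (- m * t)) \<partial>lborel) = ennreal (l / (l + m))"
proof -
  have "(\<integral>\<^sup>+t. ennreal (exponential_density l t) * ennreal (exp (- m * t)) \<partial>lborel)
     = (\<integral>\<^sup>+t. ennreal (l / (l + m)) * ennreal (exponential_density (l + m) t) \<partial>lborel)"
    using assms
    by (intro nn_integral_cong) (auto simp: exponential_density_def ennreal_mult'[symmetric] field_simps
        exp_add[symmetric])
  also have "\<dots> = ennreal (l / (l + m))"
    using assms by (simp add: nn_integral_cmult nn_integral_exponential_density)
  finally show ?thesis .
qed

lemma nn_integral_exponential_density_tail:
  assumes "0 < m" "0 \<le> t" and [measurable]: "g \<in> borel_measurable borel"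
  shows "(\<integral>\<^sup>+s. ennreal (exponential_density m s) * indicator {t..} s * g (s - t) \<partial>lborel)
       = ennreal (exp (- m * t)) * (\<integral>\<^sup>+r. ennreal (exponential_density m r) * g r \<partial>lborel)"
proof -
  have "(\<integral>\<^sup>+s. ennreal (exponential_density m s) * indicator {t..} s * g (s - t) \<partial>lborel)
      = (\<integral>\<^sup>+r. ennreal (exponential_density m (t + r)) * indicator {t..} (t + r) * g r \<partial>lborel)"
    using nn_integral_real_affine[where c=1 and t=t and
        f="\<lambda>s. ennreal (exponential_density m s) * indicator {t..} s * g (s - t)"] by simp
  also have "\<dots> = (\<integral>\<^sup>+r. ennreal (exp (- m * t)) * (ennreal (exponential_density m r) * g r) \<partial>lborel)"
    using assms
    by (intro nn_integral_cong) (auto simp: exponential_density_def ennreal_mult'[symmetric]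
        exp_add[symmetric] field_simps split: split_indicator)
  also have "\<dots> = ennreal (exp (- m * t)) * (\<integral>\<^sup>+r. ennreal (exponential_density m r) * g r \<partial>lborel)"
    by (rule nn_integral_cmult) measurable
  finally show ?thesis .
qed

lemma avg_down_shift_split:
  "avg_down m f (x + t)
     = (\<integral>\<^sup>+s. ennreal (exponential_density m s) * (if t \<le> s then 1 else 0) * f (x + t - s) \<partial>lborel)
     + (\<integral>\<^sup>+s. ennreal (exponential_density m s) * (if s < t then 1 else 0) * f (x + t - s) \<partial>lborel)"
  if [measurable]: "f \<in> borel_measurable borel"
  unfolding avg_down_eq
  by (subst nn_integral_add[symmetric]) (auto intro!: nn_integral_cong)

text \<open>
  The race between an \<open>Exp(l)\<close> clock moving up and an \<open>Exp(m)\<close> clock moving down: the up clock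
  rings first with probability \<open>l/(l+m)\<close>, and by memorylessness the down clock then starts afresh.
\<close>
lemma avg_up_avg_down_race:
  assumes l: "0 < l" and m: "0 < m" and [measurable]: "f \<in> borel_measurable borel"
  shows "avg_up l (avg_down m f) x = ennreal (l / (l + m)) * avg_down m f x + ennreal (m / (l + m)) * avg_up l f x"
proof -
  define ed where "ed = exponential_density"
  have [measurable]: "ed a \<in> borel_measurable borel" for a unfolding ed_def by measurable
  have ed_neg: "t < 0 \<Longrightarrow> ed a t = 0" for a t by (simp add: ed_def exponential_density_def)
  have down_first: "(\<integral>\<^sup>+s. ennreal (ed m s) * (if t \<le> s then 1 else 0) * f (x + t - s) \<partial>lborel)
      = ennreal (exp (- m * t)) * avg_down m f x" if "0 \<le> t" for t
  proof -
    have "(\<integral>\<^sup>+s. ennreal (ed m s) * (if t \<le> s then 1 else 0) * f (x + t - s) \<partial>lborel)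
        = (\<integral>\<^sup>+s. ennreal (ed m s) * indicator {t..} s * f (x - (s - t)) \<partial>lborel)"
      by (intro nn_integral_cong) (auto split: split_indicator simp: algebra_simps)
    then show ?thesis
      using nn_integral_exponential_density_tail[OF m that, of "\<lambda>r. f (x - r)"]
      by (simp add: avg_down_eq ed_def)
  qed
  have up_first: "(\<integral>\<^sup>+t. ennreal (ed l t) * (if s < t then 1 else 0) * f (x + t - s) \<partial>lborel)
      = ennreal (exp (- l * s)) * avg_up l f x" if "0 \<le> s" for s
  proof -
    have "(\<integral>\<^sup>+t. ennreal (ed l t) * (if s < t then 1 else 0) * f (x + t - s) \<partial>lborel)
        = (\<integral>\<^sup>+t. ennreal (ed l t) * indicator {s..} t * f (x + (t - s)) \<partial>lborel)"
      by (intro nn_integral_cong_AE AE_mp[OF AE_lborel_singleton[of s] AE_I2])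
        (auto split: split_indicator simp: algebra_simps)
    then show ?thesis
      using nn_integral_exponential_density_tail[OF l that, of "\<lambda>r. f (x + r)"]
      by (simp add: avg_up_def ed_def)
  qed
  have "avg_up l (avg_down m f) x = (\<integral>\<^sup>+t. ennreal (ed l t) * avg_down m f (x + t) \<partial>lborel)"
    by (simp add: avg_up_def ed_def)
  also have "\<dots> = (\<integral>\<^sup>+t. ennreal (ed l t) * (\<integral>\<^sup>+s. ennreal (ed m s) * (if t \<le> s then 1 else 0) * f (x + t - s) \<partial>lborel) \<partial>lborel)
       + (\<integral>\<^sup>+t. ennreal (ed l t) * (\<integral>\<^sup>+s. ennreal (ed m s) * (if s < t then 1 else 0) * f (x + t - s) \<partial>lborel) \<partial>lborel)"
    unfolding avg_down_shift_split[OF assms(3)] ed_def distrib_left by (rule nn_integral_add) measurable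
  also have "(\<integral>\<^sup>+t. ennreal (ed l t) * (\<integral>\<^sup>+s. ennreal (ed m s) * (if t \<le> s then 1 else 0) * f (x + t - s) \<partial>lborel) \<partial>lborel)
      = (\<integral>\<^sup>+t. avg_down m f x * (ennreal (ed l t) * ennreal (exp (- m * t))) \<partial>lborel)"
  proof (intro nn_integral_cong)
    fix t
    show "ennreal (ed l t) * (\<integral>\<^sup>+s. ennreal (ed m s) * (if t \<le> s then 1 else 0) * f (x + t - s) \<partial>lborel)
      = avg_down m f x * (ennreal (ed l t) * ennreal (exp (- m * t)))"
      by (cases "t < 0") (simp add: ed_neg, subst down_first, simp_all add: mult_ac)
  qed
  also have "\<dots> = avg_down m f x * ennreal (l / (l + m))"
    using nn_integral_exponential_density_mult_exp[OF l m]
    by (subst nn_integral_cmult) (auto simp: ed_def)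
  also have "(\<integral>\<^sup>+t. ennreal (ed l t) * (\<integral>\<^sup>+s. ennreal (ed m s) * (if s < t then 1 else 0) * f (x + t - s) \<partial>lborel) \<partial>lborel)
      = (\<integral>\<^sup>+s. \<integral>\<^sup>+t. ennreal (ed m s) * (ennreal (ed l t) * (if s < t then 1 else 0) * f (x + t - s)) \<partial>lborel \<partial>lborel)"
    by (subst lborel_pair.Fubini')
      (measurable, auto intro!: nn_integral_cong simp: nn_integral_cmult[symmetric] mult_ac)
  also have "\<dots> = (\<integral>\<^sup>+s. avg_up l f x * (ennreal (ed m s) * ennreal (exp (- l * s))) \<partial>lborel)"
  proof (intro nn_integral_cong)
    fix s
    have "(\<integral>\<^sup>+t. ennreal (ed m s) * (ennreal (ed l t) * (if s < t then 1 else 0) * f (x + t - s)) \<partial>lborel)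
      = ennreal (ed m s) * (\<integral>\<^sup>+t. ennreal (ed l t) * (if s < t then 1 else 0) * f (x + t - s) \<partial>lborel)"
      by (rule nn_integral_cmult) measurable
    then show "(\<integral>\<^sup>+t. ennreal (ed m s) * (ennreal (ed l t) * (if s < t then 1 else 0) * f (x + t - s)) \<partial>lborel)
      = avg_up l f x * (ennreal (ed m s) * ennreal (exp (- l * s)))"
      using up_first[of s] by (cases "s < 0") (simp_all add: ed_neg mult_ac)
  qed
  also have "\<dots> = avg_up l f x * ennreal (m / (l + m))"
    using nn_integral_exponential_density_mult_exp[OF m l]
    by (subst nn_integral_cmult) (auto simp: ed_def add.commute)
  finally show ?thesis by (simp add: mult_ac add_ac)
qed

lemma avg_down_avg_up_commute:
  assumes l: "0 < l" and m: "0 < m" and [measurable]: "f \<in> borel_measurable borel"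
  shows "avg_down m (avg_up l f) x = avg_up l (avg_down m f) x"
proof -
  define f' where "f' = (\<lambda>z. f (- z))"
  have [measurable]: "f' \<in> borel_measurable borel" unfolding f'_def by measurable
  have "(\<lambda>y. avg_up l f (- y)) = avg_down l f'"
    by (auto simp: avg_down_def f'_def)
  then have "avg_down m (avg_up l f) x = avg_up m (avg_down l f') (- x)"
    by (simp add: avg_down_def)
  also have "\<dots> = ennreal (m / (m + l)) * avg_down l f' (- x) + ennreal (l / (m + l)) * avg_up m f' (- x)"
    by (rule avg_up_avg_down_race[OF m l]) measurable
  also have "\<dots> = ennreal (l / (l + m)) * avg_down m f x + ennreal (m / (l + m)) * avg_up l f x"
    by (simp add: avg_down_def f'_def add_ac)
  finally show ?thesis by (simp add: avg_up_avg_down_race[OF l m])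
qed

lemma avg_up_const: "0 < l \<Longrightarrow> avg_up l (\<lambda>_. c) x = c"
  unfolding avg_up_def by (subst nn_integral_multc) (auto simp: nn_integral_exponential_density)

lemma avg_up_add:
  assumes [measurable]: "f \<in> borel_measurable borel" "g \<in> borel_measurable borel"
  shows "avg_up l (\<lambda>y. f y + g y) x = avg_up l f x + avg_up l g x"
  unfolding avg_up_def by (subst nn_integral_add[symmetric]) (auto simp: distrib_left)

lemma avg_up_mono: "(\<And>y. f y \<le> g y) \<Longrightarrow> avg_up l f x \<le> avg_up l g x"
  unfolding avg_up_def by (intro nn_integral_mono mult_left_mono) auto

lemma nn_integral_avg_up:
  assumes l: "0 < l" and [measurable]: "f \<in> borel_measurable borel"
  shows "(\<integral>\<^sup>+x. avg_up l f x \<partial>lborel) = (\<integral>\<^sup>+x. f x \<partial>lborel)"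
proof -
  have "(\<integral>\<^sup>+x. avg_up l f x \<partial>lborel) = (\<integral>\<^sup>+t. \<integral>\<^sup>+x. ennreal (exponential_density l t) * f (x + t) \<partial>lborel \<partial>lborel)"
    unfolding avg_up_def by (rule lborel_pair.Fubini') measurable
  also have "\<dots> = (\<integral>\<^sup>+t. ennreal (exponential_density l t) * (\<integral>\<^sup>+x. f x \<partial>lborel) \<partial>lborel)"
  proof (intro nn_integral_cong)
    fix t
    have "(\<integral>\<^sup>+x. f (x + t) \<partial>lborel) = (\<integral>\<^sup>+x. f x \<partial>lborel)"
      using nn_integral_real_affine[where c=1 and t=t and f=f] by (simp add: add.commute)
    then show "(\<integral>\<^sup>+x. ennreal (exponential_density l t) * f (x + t) \<partial>lborel)
      = ennreal (exponential_density l t) * (\<integral>\<^sup>+x. f x \<partial>lborel)"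
      by (subst nn_integral_cmult) auto
  qed
  also have "\<dots> = (\<integral>\<^sup>+x. f x \<partial>lborel)"
    using l by (subst nn_integral_multc) (auto simp: nn_integral_exponential_density)
  finally show ?thesis .
qed

lemma nn_integral_reflect:
  fixes g :: "real \<Rightarrow> ennreal"
  assumes [measurable]: "g \<in> borel_measurable borel"
  shows "(\<integral>\<^sup>+x. g (- x) \<partial>lborel) = (\<integral>\<^sup>+x. g x \<partial>lborel)"
  using nn_integral_real_affine[where c="-1" and t=0 and f=g] by simp

lemma avg_up_le_abs:
  assumes l: "0 < l" and eta: "0 < eta" and c: "0 \<le> c" and f: "\<And>y. f y \<le> ennreal ((\<bar>y\<bar> + c) / eta)"
  shows "avg_up l f x \<le> ennreal ((\<bar>x\<bar> + c + 1 / l) / eta)"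
proof -
  define ed where "ed = exponential_density l"
  have "avg_up l f x \<le> (\<integral>\<^sup>+t. ennreal (ed t * ((\<bar>x\<bar> + c) / eta)) + ennreal (ed t * t / eta) \<partial>lborel)"
    unfolding avg_up_def ed_def[symmetric]
  proof (intro nn_integral_mono)
    fix t
    show "ennreal (ed t) * f (x + t) \<le> ennreal (ed t * ((\<bar>x\<bar> + c) / eta)) + ennreal (ed t * t / eta)"
    proof (cases "t < 0")
      case True then show ?thesis by (simp add: ed_def exponential_density_def)
    next
      case False
      have "f (x + t) \<le> ennreal ((\<bar>x\<bar> + c + t) / eta)"
        using False eta f[of "x + t"]
        by (elim order_trans, intro ennreal_leI divide_right_mono) auto
      then have "ennreal (ed t) * f (x + t) \<le> ennreal (ed t) * ennreal ((\<bar>x\<bar> + c + t) / eta)"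
        by (rule mult_left_mono) simp
      also have "\<dots> = ennreal (ed t * ((\<bar>x\<bar> + c + t) / eta))"
        using False eta c exponential_density_nonneg[OF l, of t]
        by (intro ennreal_mult[symmetric]) (simp_all add: ed_def)
      also have "\<dots> = ennreal (ed t * ((\<bar>x\<bar> + c) / eta) + ed t * t / eta)"
        by (simp add: add_divide_distrib distrib_left)
      also have "\<dots> = ennreal (ed t * ((\<bar>x\<bar> + c) / eta)) + ennreal (ed t * t / eta)"
        using False eta c exponential_density_nonneg[OF l, of t] by (simp add: ed_def)
      finally show ?thesis .
    qed
  qed
  also have "\<dots> = (\<integral>\<^sup>+t. ennreal (ed t) * ennreal ((\<bar>x\<bar> + c) / eta) \<partial>lborel)
      + (\<integral>\<^sup>+t. ennreal (ed t * t) * ennreal (1 / eta) \<partial>lborel)"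
    using eta c
    by (subst nn_integral_add[symmetric])
      (auto intro!: nn_integral_cong simp: ed_def ennreal_mult''[symmetric] exponential_density_def)
  also have "\<dots> = ennreal ((\<bar>x\<bar> + c) / eta) + ennreal (1 / l) * ennreal (1 / eta)"
    using l nn_integral_erlang_ith_moment[of l 0 1]
    by (simp add: nn_integral_multc nn_integral_exponential_density ed_def)
  also have "\<dots> = ennreal ((\<bar>x\<bar> + c + 1 / l) / eta)"
    using l eta c by (simp add: ennreal_mult''[symmetric] ennreal_plus[symmetric] add_divide_distrib del: ennreal_plus)
  finally show ?thesis .
qed

text \<open>
  \<open>avg_ups a k i g x\<close> averages \<open>g\<close> over \<open>x\<close> plus the time the clock of a coordinate needs to climb
  from level \<open>i\<close> to level \<open>i + k\<close>; \<open>avg_downs\<close> subtracts that time instead.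
\<close>
primrec avg_ups :: "real \<Rightarrow> nat \<Rightarrow> nat \<Rightarrow> (real \<Rightarrow> ennreal) \<Rightarrow> real \<Rightarrow> ennreal" where
  "avg_ups a 0 i g = g"
| "avg_ups a (Suc k) i g = avg_up (real i powr a) (avg_ups a k (Suc i) g)"

definition avg_downs :: "real \<Rightarrow> nat \<Rightarrow> nat \<Rightarrow> (real \<Rightarrow> ennreal) \<Rightarrow> real \<Rightarrow> ennreal" where
  "avg_downs a k i g x = avg_ups a k i (\<lambda>y. g (- y)) (- x)"

lemma avg_downs_0[simp]: "avg_downs a 0 i g = g"
  by (simp add: avg_downs_def[abs_def])

lemma avg_downs_Suc: "avg_downs a (Suc k) i g = avg_down (real i powr a) (avg_downs a k (Suc i) g)"
  by (simp add: avg_downs_def avg_down_def fun_eq_iff)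

lemma avg_ups_measurable[measurable]: "g \<in> borel_measurable borel \<Longrightarrow> avg_ups a k i g \<in> borel_measurable borel"
  by (induction k arbitrary: i) auto

lemma avg_downs_measurable[measurable]:
  assumes [measurable]: "g \<in> borel_measurable borel"
  shows "avg_downs a k i g \<in> borel_measurable borel"
  unfolding avg_downs_def[abs_def] by measurable

lemma avg_ups_avg_down_commute:
  assumes "1 \<le> i" "1 \<le> j" and [measurable]: "g \<in> borel_measurable borel"
  shows "avg_ups a k i (avg_down (real j powr a) g) = avg_down (real j powr a) (avg_ups a k i g)"
  using assms(1)
proof (induction k arbitrary: i)
  case (Suc k)
  then have "avg_ups a (Suc k) i (avg_down (real j powr a) g)
      = avg_up (real i powr a) (avg_down (real j powr a) (avg_ups a k (Suc i) g))"
    by simp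
  also have "\<dots> = avg_down (real j powr a) (avg_up (real i powr a) (avg_ups a k (Suc i) g))"
    using Suc.prems assms(2) by (intro ext avg_down_avg_up_commute[symmetric]) auto
  finally show ?case by simp
qed simp

lemma avg_ups_const: "1 \<le> i \<Longrightarrow> avg_ups a k i (\<lambda>_. c) = (\<lambda>_. c)"
  by (induction k arbitrary: i) (auto simp: avg_up_const)

lemma avg_downs_const: "1 \<le> i \<Longrightarrow> avg_downs a k i (\<lambda>_. c) = (\<lambda>_. c)"
  by (simp add: avg_downs_def[abs_def] avg_ups_const)

lemma avg_ups_add:
  assumes [measurable]: "f \<in> borel_measurable borel" "g \<in> borel_measurable borel"
  shows "avg_ups a k i (\<lambda>y. f y + g y) x = avg_ups a k i f x + avg_ups a k i g x"
proof (induction k arbitrary: i x)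
  case (Suc k)
  then have "avg_ups a k (Suc i) (\<lambda>y. f y + g y) = (\<lambda>y. avg_ups a k (Suc i) f y + avg_ups a k (Suc i) g y)"
    by (intro ext)
  then show ?case by (simp add: avg_up_add)
qed simp

lemma avg_downs_add:
  assumes [measurable]: "f \<in> borel_measurable borel" "g \<in> borel_measurable borel"
  shows "avg_downs a k i (\<lambda>y. f y + g y) x = avg_downs a k i f x + avg_downs a k i g x"
  unfolding avg_downs_def by (rule avg_ups_add) measurable

lemma avg_ups_mono: "(\<And>y. f y \<le> g y) \<Longrightarrow> avg_ups a k i f x \<le> avg_ups a k i g x"
  by (induction k arbitrary: i x) (auto intro!: avg_up_mono)

lemma avg_downs_mono: "(\<And>y. f y \<le> g y) \<Longrightarrow> avg_downs a k i f x \<le> avg_downs a k i g x"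
  unfolding avg_downs_def by (rule avg_ups_mono) simp

lemma nn_integral_avg_ups:
  "1 \<le> i \<Longrightarrow> g \<in> borel_measurable borel \<Longrightarrow> (\<integral>\<^sup>+x. avg_ups a k i g x \<partial>lborel) = (\<integral>\<^sup>+x. g x \<partial>lborel)"
  by (induction k arbitrary: i) (auto simp: nn_integral_avg_up)

lemma nn_integral_avg_downs:
  assumes "1 \<le> i" and [measurable]: "g \<in> borel_measurable borel"
  shows "(\<integral>\<^sup>+x. avg_downs a k i g x \<partial>lborel) = (\<integral>\<^sup>+x. g x \<partial>lborel)"
  unfolding avg_downs_def
  by (subst nn_integral_reflect, measurable, subst nn_integral_avg_ups[OF assms(1)])
    (measurable, rule nn_integral_reflect, measurable)

lemma avg_ups_le_abs:
  assumes "1 \<le> i" "0 < eta" "0 \<le> c" "\<And>y. f y \<le> ennreal ((\<bar>y\<bar> + c) / eta)"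
  shows "avg_ups a k i f x \<le> ennreal ((\<bar>x\<bar> + c + (\<Sum>l\<in>{i..<i+k}. 1 / real l powr a)) / eta)"
  using assms(1)
proof (induction k arbitrary: i x)
  case 0 then show ?case using assms by simp
next
  case (Suc k)
  define S where "S = (\<Sum>l\<in>{Suc i..<Suc i+k}. 1 / real l powr a)"
  have "0 \<le> S" unfolding S_def by (intro sum_nonneg) auto
  have IH: "avg_ups a k (Suc i) f y \<le> ennreal ((\<bar>y\<bar> + (c + S)) / eta)" for y
    using Suc.IH[of "Suc i" y] unfolding S_def by (simp add: add_ac)
  have "avg_ups a (Suc k) i f x \<le> ennreal ((\<bar>x\<bar> + (c + S) + 1 / real i powr a) / eta)"
    unfolding avg_ups.simps
    by (rule avg_up_le_abs[OF _ assms(2) _ IH]) (use Suc.prems \<open>0 \<le> S\<close> assms(3) in auto)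
  moreover have "(\<Sum>l\<in>{i..<i+Suc k}. 1 / real l powr a) = 1 / real i powr a + S"
    unfolding S_def by (subst sum.atLeast_Suc_lessThan) auto
  ultimately show ?case by (simp only: add_ac)
qed

lemma avg_downs_le_abs:
  assumes "1 \<le> i" "0 < eta" "0 \<le> c" "\<And>y. f y \<le> ennreal ((\<bar>y\<bar> + c) / eta)"
  shows "avg_downs a k i f x \<le> ennreal ((\<bar>x\<bar> + c + (\<Sum>l\<in>{i..<i+k}. 1 / real l powr a)) / eta)"
proof -
  have "f (- y) \<le> ennreal ((\<bar>y\<bar> + c) / eta)" for y
    using assms(4)[of "- y"] by simp
  then show ?thesis
    using avg_ups_le_abs[OF assms(1-3), of "\<lambda>y. f (- y)" a k "- x"] by (simp add: avg_downs_def)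
qed

text \<open>
  \<open>gap_avg a N F i j x\<close> is \<open>E[F(x + D)]\<close> in state \<open>(i, j)\<close>, where \<open>D\<close> is the time the first clock
  needs to reach level \<open>N + 1\<close> minus the time the second clock needs for the same.
\<close>
definition gap_avg :: "real \<Rightarrow> nat \<Rightarrow> (real \<Rightarrow> ennreal) \<Rightarrow> nat \<Rightarrow> nat \<Rightarrow> real \<Rightarrow> ennreal" where
  "gap_avg a N F i j = avg_ups a (N + 1 - i) i (avg_downs a (N + 1 - j) j F)"

lemma gap_avg_measurable[measurable]:
  "F \<in> borel_measurable borel \<Longrightarrow> gap_avg a N F i j \<in> borel_measurable borel"
  unfolding gap_avg_def by measurable

lemma gap_avg_const: "1 \<le> i \<Longrightarrow> 1 \<le> j \<Longrightarrow> gap_avg a N (\<lambda>_. c) i j x = c"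
  by (simp add: gap_avg_def avg_downs_const avg_ups_const)

lemma gap_avg_add:
  assumes [measurable]: "F \<in> borel_measurable borel" "G \<in> borel_measurable borel"
  shows "gap_avg a N (\<lambda>y. F y + G y) i j x = gap_avg a N F i j x + gap_avg a N G i j x"
proof -
  have "avg_downs a k j (\<lambda>y. F y + G y) = (\<lambda>y. avg_downs a k j F y + avg_downs a k j G y)" for k
    by (intro ext avg_downs_add) measurable
  then show ?thesis
    unfolding gap_avg_def by (simp add: avg_ups_add)
qed

lemma gap_avg_harmonic:
  assumes "1 \<le> i" "i \<le> N" "1 \<le> j" "j \<le> N" and [measurable]: "F \<in> borel_measurable borel"
  shows "gap_avg a N F i j x
    = ennreal (real i powr a / (real i powr a + real j powr a)) * gap_avg a N F (Suc i) j x
    + ennreal (real j powr a / (real i powr a + real j powr a)) * gap_avg a N F i (Suc j) x"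
proof -
  define W where "W = avg_ups a (N - i) (Suc i) (avg_downs a (N - j) (Suc j) F)"
  have [measurable]: "W \<in> borel_measurable borel" unfolding W_def by measurable
  have N: "N + 1 - i = Suc (N - i)" "N + 1 - j = Suc (N - j)" "N + 1 - Suc i = N - i" "N + 1 - Suc j = N - j"
    using assms by auto
  have "gap_avg a N F (Suc i) j = avg_down (real j powr a) W"
    unfolding gap_avg_def N W_def avg_downs_Suc using assms by (simp add: avg_ups_avg_down_commute)
  moreover have "gap_avg a N F i (Suc j) = avg_up (real i powr a) W"
    unfolding gap_avg_def N W_def by simp
  moreover have "gap_avg a N F i j = avg_up (real i powr a) (avg_down (real j powr a) W)"
    unfolding gap_avg_def N W_def avg_downs_Suc using assms by (simp add: avg_ups_avg_down_commute)
  ultimately show ?thesis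
    using assms by (simp add: avg_up_avg_down_race)
qed

lemma set_pmf_bingo_dist:
  "s \<in> set_pmf (bingo_dist a n) \<Longrightarrow> 1 \<le> fst s \<and> 1 \<le> snd s \<and> fst s + snd s = n + 2"
proof (induction n arbitrary: s)
  case (Suc n)
  then obtain s0 where s0: "s0 \<in> set_pmf (bingo_dist a n)" "s \<in> set_pmf (bingo_step a s0)"
    by auto
  then show ?case
    using Suc.IH[OF s0(1)] by (cases s0) (auto simp: bingo_step_def split: if_splits)
qed simp

lemma nn_integral_bingo_step:
  fixes a :: real and i j :: nat
  defines "p \<equiv> real i powr a / (real i powr a + real j powr a)"
  assumes "1 \<le> i" "1 \<le> j"
  shows "(\<integral>\<^sup>+s. g s \<partial>bingo_step a (i, j)) = ennreal p * g (i + 1, j) + ennreal (1 - p) * g (i, j + 1)"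
proof -
  have "0 < real i powr a" "0 < real j powr a"
    using assms by auto
  then have "0 \<le> p" "p \<le> 1"
    unfolding p_def by (simp_all add: less_imp_le add_pos_pos)
  then show ?thesis
    by (simp add: bingo_step_def p_def[symmetric] mult.commute)
qed

lemma nn_integral_bingo_dist_gap_avg:
  assumes "n \<le> N" and [measurable]: "F \<in> borel_measurable borel"
  shows "(\<integral>\<^sup>+s. gap_avg a N F (fst s) (snd s) x \<partial>bingo_dist a n) = gap_avg a N F 1 1 x"
  using assms(1)
proof (induction n)
  case (Suc n)
  have "(\<integral>\<^sup>+s. gap_avg a N F (fst s) (snd s) x \<partial>bingo_dist a (Suc n))
     = (\<integral>\<^sup>+s0. (\<integral>\<^sup>+s. gap_avg a N F (fst s) (snd s) x \<partial>bingo_step a s0) \<partial>bingo_dist a n)"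
    by simp
  also have "\<dots> = (\<integral>\<^sup>+s0. gap_avg a N F (fst s0) (snd s0) x \<partial>bingo_dist a n)"
  proof (intro nn_integral_cong_AE AE_pmfI)
    fix s0 assume s0: "s0 \<in> set_pmf (bingo_dist a n)"
    obtain i j where ij: "s0 = (i, j)" by (cases s0)
    have "1 \<le> i" "i \<le> N" "1 \<le> j" "j \<le> N"
      using set_pmf_bingo_dist[OF s0] Suc.prems unfolding ij by auto
    moreover have "0 < real i powr a + real j powr a"
      using \<open>1 \<le> i\<close> by (intro add_pos_nonneg) auto
    ultimately show "(\<integral>\<^sup>+s. gap_avg a N F (fst s) (snd s) x \<partial>bingo_step a s0) = gap_avg a N F (fst s0) (snd s0) x"
      unfolding ij by (simp add: nn_integral_bingo_step gap_avg_harmonic[of i N j] field_simps)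
  qed
  finally show ?case using Suc by simp
qed simp

text \<open>The first clock starts with an \<open>Exp(1)\<close> step, whose density is at most \<open>1\<close>.\<close>
lemma gap_avg_start_le:
  assumes "1 \<le> N" "0 < eta"
  shows "gap_avg a N (indicator {-eta..eta}) 1 1 0 \<le> ennreal (2 * eta)"
proof -
  define F :: "real \<Rightarrow> ennreal" where "F = indicator {-eta..eta}"
  define C where "C = avg_ups a (N - 1) 2 (avg_downs a N 1 F)"
  have [measurable]: "F \<in> borel_measurable borel" "C \<in> borel_measurable borel"
    unfolding F_def C_def by measurable
  have "gap_avg a N F 1 1 0 = avg_up 1 C 0"
    using assms(1) unfolding gap_avg_def C_def by (cases N) (simp_all add: numeral_2_eq_2)
  also have "\<dots> \<le> (\<integral>\<^sup>+t. C t \<partial>lborel)"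
    unfolding avg_up_def
  proof (intro nn_integral_mono)
    fix t
    have "ennreal (exponential_density 1 t) \<le> 1"
      by (auto simp: exponential_density_def)
    then show "ennreal (exponential_density 1 t) * C (0 + t) \<le> C t"
      using mult_right_mono[of _ 1 "C t"] by simp
  qed
  also have "\<dots> = (\<integral>\<^sup>+t. F t \<partial>lborel)"
    unfolding C_def by (simp add: nn_integral_avg_ups nn_integral_avg_downs)
  also have "\<dots> = ennreal (2 * eta)"
    unfolding F_def using assms(2) by simp
  finally show ?thesis unfolding F_def .
qed

text \<open>Markov's inequality for \<open>|D|\<close>, using that each clock needs mean time \<open>l\<^sup>-\<^sup>a\<close> at level \<open>l\<close>.\<close>
lemma gap_avg_ge:
  assumes "1 \<le> i" "1 \<le> j" "i \<le> N + 1" "j \<le> N + 1" and eta: "0 < eta"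
  shows "1 \<le> gap_avg a N (indicator {-eta..eta}) i j 0
     + ennreal (((\<Sum>l\<in>{i..<N+1}. 1 / real l powr a) + (\<Sum>l\<in>{j..<N+1}. 1 / real l powr a)) / eta)"
proof -
  define F :: "real \<Rightarrow> ennreal" where "F = indicator {-eta..eta}"
  define G where "G = (\<lambda>y. ennreal (\<bar>y\<bar> / eta))"
  define Sj where "Sj = (\<Sum>l\<in>{j..<N+1}. 1 / real l powr a)"
  have meas[measurable]: "F \<in> borel_measurable borel" "G \<in> borel_measurable borel"
    unfolding F_def G_def by measurable
  have "1 \<le> F y + G y" for y
  proof (cases "\<bar>y\<bar> \<le> eta")
    case False
    then have "1 \<le> G y"
      using eta by (simp add: G_def ennreal_1[symmetric] del: ennreal_1)
    then show ?thesis by (rule order_trans) simp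
  qed (simp add: F_def abs_le_iff)
  then have "gap_avg a N (\<lambda>_. 1) i j 0 \<le> gap_avg a N (\<lambda>y. F y + G y) i j 0"
    unfolding gap_avg_def by (intro avg_ups_mono avg_downs_mono)
  then have "1 \<le> gap_avg a N F i j 0 + gap_avg a N G i j 0"
    using assms(1,2) by (simp add: gap_avg_add[OF meas] gap_avg_const)
  moreover have "gap_avg a N G i j 0 \<le> ennreal (((\<Sum>l\<in>{i..<N+1}. 1 / real l powr a) + Sj) / eta)"
  proof -
    have "0 \<le> Sj" unfolding Sj_def by (intro sum_nonneg) auto
    moreover have "avg_downs a (N + 1 - j) j G y \<le> ennreal ((\<bar>y\<bar> + Sj) / eta)" for y
      using avg_downs_le_abs[OF assms(2) eta order_refl, of G a "N + 1 - j" y] assms(4)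
      unfolding Sj_def by (simp add: G_def)
    ultimately have "gap_avg a N G i j 0
        \<le> ennreal ((\<bar>0\<bar> + Sj + (\<Sum>l\<in>{i..<i + (N + 1 - i)}. 1 / real l powr a)) / eta)"
      unfolding gap_avg_def by (rule avg_ups_le_abs[OF assms(1) eta])
    then show ?thesis
      using assms(3) by (simp add: add.commute)
  qed
  ultimately show ?thesis
    unfolding F_def Sj_def by (blast intro: order_trans add_left_mono)
qed

definition powr_tail :: "real \<Rightarrow> nat \<Rightarrow> real" where
  "powr_tail a M = (\<Sum>l. 1 / real (l + M) powr a)"

lemma summable_inverse_powr_shift:
  assumes "1 < a"
  shows "summable (\<lambda>l. 1 / real (l + M) powr a)"
proof -
  have "summable (\<lambda>n. real n powr (- a))"
    using assms by (subst summable_real_powr_iff) auto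
  then have "summable (\<lambda>n. real (n + M) powr (- a))"
    by (rule summable_ignore_initial_segment)
  then show ?thesis by (simp add: powr_minus_divide)
qed

lemma powr_tail_pos: "1 < a \<Longrightarrow> 0 < powr_tail a M"
  unfolding powr_tail_def by (rule suminf_pos2[OF summable_inverse_powr_shift, where i=1]) auto

lemma powr_tail_tendsto_zero: "1 < a \<Longrightarrow> powr_tail a \<longlonglongrightarrow> 0"
  unfolding powr_tail_def[abs_def]
  using suminf_exist_split2[OF summable_inverse_powr_shift[of a 0]] by simp

lemma sum_inverse_powr_le_powr_tail:
  assumes "1 < a" "M \<le> i"
  shows "(\<Sum>l\<in>{i..<K}. 1 / real l powr a) \<le> powr_tail a M"
proof -
  have "(\<Sum>l\<in>{i..<K}. 1 / real l powr a) \<le> (\<Sum>l\<in>{M..<K}. 1 / real l powr a)"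
    using assms by (intro sum_mono2) auto
  also have "\<dots> = (\<Sum>l<K - M. 1 / real (l + M) powr a)"
    by (simp add: sum.atLeastLessThan_shift_0 atLeast0LessThan add.commute)
  also have "\<dots> \<le> powr_tail a M"
    unfolding powr_tail_def by (intro sum_le_suminf summable_inverse_powr_shift assms) auto
  finally show ?thesis .
qed

definition corner_prob :: "real \<Rightarrow> nat \<Rightarrow> nat \<Rightarrow> real" where
  "corner_prob a n M = measure_pmf.prob (bingo_dist a n) {s. M \<le> fst s \<and> M \<le> snd s}"

lemma emeasure_corner_le:
  assumes a: "1 < a" and eta: "0 < eta"
  shows "emeasure (bingo_dist a n) {s. M \<le> fst s \<and> M \<le> snd s}
     \<le> ennreal (2 * eta) + ennreal (2 * powr_tail a M / eta)"
proof -
  define F :: "real \<Rightarrow> ennreal" where "F = indicator {-eta..eta}"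
  define A where "A = {s::nat \<times> nat. M \<le> fst s \<and> M \<le> snd s}"
  define B where "B = ennreal (2 * powr_tail a M / eta)"
  have [measurable]: "F \<in> borel_measurable borel" unfolding F_def by measurable
  have "indicator A s \<le> gap_avg a (n + 1) F (fst s) (snd s) 0 + B" if s: "s \<in> set_pmf (bingo_dist a n)" for s
  proof (cases "s \<in> A")
    case True
    obtain i j where ij: "s = (i, j)" by (cases s)
    have bounds: "1 \<le> i" "1 \<le> j" "i \<le> n + 2" "j \<le> n + 2" "M \<le> i" "M \<le> j"
      using set_pmf_bingo_dist[OF s] True unfolding ij A_def by auto
    have "1 \<le> gap_avg a (n + 1) F i j 0
        + ennreal (((\<Sum>l\<in>{i..<n+2}. 1 / real l powr a) + (\<Sum>l\<in>{j..<n+2}. 1 / real l powr a)) / eta)"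
      using gap_avg_ge[of i j "n + 1" eta a] bounds eta by (simp add: F_def)
    also have "\<dots> \<le> gap_avg a (n + 1) F i j 0 + B"
      unfolding B_def
      using sum_inverse_powr_le_powr_tail[OF a bounds(5), of "n + 2"]
        sum_inverse_powr_le_powr_tail[OF a bounds(6), of "n + 2"] eta
      by (intro add_left_mono ennreal_leI divide_right_mono) linarith+
    finally show ?thesis using True unfolding ij by simp
  qed simp
  then have "emeasure (bingo_dist a n) A \<le> (\<integral>\<^sup>+s. gap_avg a (n + 1) F (fst s) (snd s) 0 + B \<partial>bingo_dist a n)"
    by (simp add: nn_integral_mono_AE AE_pmfI flip: nn_integral_indicator)
  also have "\<dots> = gap_avg a (n + 1) F 1 1 0 + B"
    by (simp add: nn_integral_add measure_pmf.emeasure_space_1 nn_integral_bingo_dist_gap_avg)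
  also have "\<dots> \<le> ennreal (2 * eta) + B"
    unfolding F_def using eta by (intro add_right_mono gap_avg_start_le) auto
  finally show ?thesis unfolding A_def B_def .
qed

lemma corner_prob_le_sqrt_powr_tail:
  assumes "1 < a"
  shows "corner_prob a n M \<le> 4 * sqrt (powr_tail a M)"
proof -
  define eta where "eta = sqrt (powr_tail a M)"
  have "0 < eta" unfolding eta_def using powr_tail_pos[OF assms] by simp
  have tail: "powr_tail a M = eta * eta"
    unfolding eta_def using powr_tail_pos[OF assms, of M] by simp
  have "ennreal (corner_prob a n M) \<le> ennreal (2 * eta) + ennreal (2 * powr_tail a M / eta)"
    using emeasure_corner_le[OF assms \<open>0 < eta\<close>] by (simp add: corner_prob_def measure_pmf.emeasure_eq_measure)
  also have "\<dots> = ennreal (4 * eta)"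
    using \<open>0 < eta\<close> by (simp add: tail flip: ennreal_plus)
  finally show ?thesis
    using \<open>0 < eta\<close> by (simp add: eta_def)
qed

lemma corner_prob_incseq: "incseq (\<lambda>n. corner_prob a n M)"
proof (rule incseq_SucI)
  fix n
  define A where "A = {s::nat \<times> nat. M \<le> fst s \<and> M \<le> snd s}"
  have "indicator A s0 \<le> emeasure (bingo_step a s0) A" for s0
  proof (cases "s0 \<in> A")
    case True
    then have "emeasure (bingo_step a s0) A = 1"
      by (intro measure_pmf.emeasure_eq_1_AE AE_pmfI)
        (auto simp: A_def bingo_step_def split: prod.splits if_splits)
    then show ?thesis by (simp split: split_indicator)
  qed simp
  then have "emeasure (bingo_dist a n) A \<le> emeasure (bingo_dist a (Suc n)) A"
    by (auto simp: nn_integral_mono simp flip: nn_integral_indicator)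
  then show "corner_prob a n M \<le> corner_prob a (Suc n) M"
    by (simp add: corner_prob_def A_def[symmetric] measure_pmf.emeasure_eq_measure)
qed

lemma sum_bingo_prob_eq_corner_prob:
  assumes "2 \<le> k"
  shows "(\<Sum>i=M..k-M. bingo_prob a i (k - i)) = corner_prob a (k - 2) M"
proof -
  define p where "p = bingo_dist a (k - 2)"
  define A where "A = {s::nat \<times> nat. M \<le> fst s \<and> M \<le> snd s}"
  define I where "I = (\<lambda>i. (i, k - i)) ` {M..k-M}"
  have "A \<inter> set_pmf p = I \<inter> set_pmf p"
  proof (intro equalityI subsetI)
    fix s assume s: "s \<in> A \<inter> set_pmf p"
    then have "fst s + snd s = k"
      using set_pmf_bingo_dist[of s a "k - 2"] assms unfolding p_def by auto
    with s show "s \<in> I \<inter> set_pmf p" unfolding A_def I_def by (cases s) (auto simp: image_iff)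
  qed (auto simp: A_def I_def)
  then have "measure_pmf.prob p A = measure_pmf.prob p I"
    by (metis measure_Int_set_pmf)
  also have "\<dots> = (\<Sum>i=M..k-M. pmf p (i, k - i))"
    unfolding I_def by (subst measure_measure_pmf_finite) (auto simp: sum.reindex inj_on_def)
  also have "\<dots> = (\<Sum>i=M..k-M. bingo_prob a i (k - i))"
    unfolding bingo_prob_def p_def by (intro sum.cong) auto
  finally show ?thesis
    unfolding corner_prob_def p_def A_def by simp
qed

lemma bdd_above_corner_prob: "bdd_above (range (\<lambda>n. corner_prob a n M))"
  by (rule bdd_aboveI[of _ 1]) (auto simp: corner_prob_def)

lemma sum_bingo_prob_tendsto:
  "(\<lambda>k. \<Sum>i=M..k-M. bingo_prob a i (k - i)) \<longlonglongrightarrow> (SUP n. corner_prob a n M)"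
proof (rule LIMSEQ_offset[where k=2])
  have "(\<lambda>n. corner_prob a n M) \<longlonglongrightarrow> (SUP n. corner_prob a n M)"
    by (rule LIMSEQ_incseq_SUP[OF bdd_above_corner_prob corner_prob_incseq])
  then show "(\<lambda>k. \<Sum>i=M..k + 2 - M. bingo_prob a i (k + 2 - i)) \<longlonglongrightarrow> (SUP n. corner_prob a n M)"
    by (simp add: sum_bingo_prob_eq_corner_prob)
qed

theorem mainTheorem7:
  fixes \<alpha> :: real
  assumes "\<alpha> > 1"
  shows "(\<forall>M::nat. convergent (\<lambda>k::nat. \<Sum>i=M..k-M. bingo_prob \<alpha> i (k - i)))
         \<and> (\<lambda>M::nat. lim (\<lambda>k::nat. \<Sum>i=M..k-M. bingo_prob \<alpha> i (k - i))) \<longlonglongrightarrow> 0"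
proof -
  define L where "L M = (SUP n. corner_prob \<alpha> n M)" for M
  have lim: "lim (\<lambda>k. \<Sum>i=M..k-M. bingo_prob \<alpha> i (k - i)) = L M" for M
    unfolding L_def by (rule limI[OF sum_bingo_prob_tendsto])
  have lower: "0 \<le> L M" for M
    unfolding L_def by (rule cSUP_upper2[OF bdd_above_corner_prob, of 0]) (simp_all add: corner_prob_def)
  have upper: "L M \<le> 4 * sqrt (powr_tail \<alpha> M)" for M
    unfolding L_def by (rule cSUP_least) (simp_all add: corner_prob_le_sqrt_powr_tail[OF assms])
  have bound_lim: "(\<lambda>M. 4 * sqrt (powr_tail \<alpha> M)) \<longlonglongrightarrow> 0"
    using tendsto_mult_right_zero[of "\<lambda>M. sqrt (powr_tail \<alpha> M)" sequentially 4]
      tendsto_real_sqrt[OF powr_tail_tendsto_zero[OF assms]] by simp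
  have "L \<longlonglongrightarrow> 0"
    by (rule tendsto_sandwich[OF always_eventually always_eventually tendsto_const bound_lim])
      (simp_all add: lower upper)
  moreover have "convergent (\<lambda>k. \<Sum>i=M..k-M. bingo_prob \<alpha> i (k - i))" for M
    using sum_bingo_prob_tendsto convergent_def by blast
  ultimately show ?thesis
    unfolding lim by blast
qed

end
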